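(* For a fixed $\tau=\tau_1\ldots\tau_k\in\mathcal{S}_k$ and $n\ge k$, the number $\mathrm{inv}_n(\tau)$ of involutions in $\mathcal{S}_n$ which contain $\tau$ as a subsequence equals $$\sum_{j\in\mathcal{J}(\tau)}\binom{n-k}{k-j}t_{n-2k+j}.$$
   Context: $t_m$ denotes the number of involutions in $\mathcal{S}_m$ ($t_0=1$); terms with $k-j>n-k$ are $0$. A permutation $\pi=\pi_1\ldots\pi_n$ contains $\tau$ as a subsequence if there are indices $i_1<\cdots<i_k$ with $\pi_{i_r}=\tau_r$ for all $r$. The pattern of a word of $j$ distinct letters is its order-preserving relabeling by $\{1,\ldots,j\}$; the length-$j$ initial pattern of $\tau$ is the pattern of $\tau_1\ldots\tau_j$. The $j$-set $\mathcal{J}(\tau)$ of $\tau\in\mathcal{S}_k$ is the set consisting of $0$ together with all $j\in\{1,\ldots,k\}$ such that the length-$j$ initial pattern of $\tau$ is an involution in $\mathcal{S}_j$. *)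

theory Defs
  imports Main
begin

text \<open>Permutations of S_n are represented in one-line notation as lists
  pi_1 ... pi_n (list index i-1 holds pi_i), with values in 1..n.\<close>

definition perms :: "nat \<Rightarrow> nat list set" where
  "perms n = {p. length p = n \<and> distinct p \<and> set p = {1..n}}"

definition is_involution :: "nat list \<Rightarrow> bool" where
  "is_involution p \<longleftrightarrow> (\<forall>i < length p. p ! (p ! i - 1) = i + 1)"

definition involutions :: "nat \<Rightarrow> nat list set" where
  "involutions n = {p \<in> perms n. is_involution p}"

definition t :: "nat \<Rightarrow> nat" where
  "t m = card (involutions m)"

definition contains_subseq :: "nat list \<Rightarrow> nat list \<Rightarrow> bool" where
  "contains_subseq p \<tau> \<longleftrightarrow>
     (\<exists>is. length is = length \<tau> \<and> sorted_wrt (<) is \<and>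
        (\<forall>r < length \<tau>. is ! r < length p \<and> p ! (is ! r) = \<tau> ! r))"

text \<open>Pattern of a word of distinct letters: order-preserving relabeling by 1..j.\<close>
definition pattern :: "nat list \<Rightarrow> nat list" where
  "pattern w = map (\<lambda>x. card {y \<in> set w. y \<le> x}) w"

definition initial_pattern :: "nat \<Rightarrow> nat list \<Rightarrow> nat list" where
  "initial_pattern j \<tau> = pattern (take j \<tau>)"

definition jset :: "nat list \<Rightarrow> nat set" where
  "jset \<tau> = {0} \<union> {j \<in> {1..length \<tau>}. initial_pattern j \<tau> \<in> involutions j}"

definition inv_count :: "nat \<Rightarrow> nat list \<Rightarrow> nat" where
  "inv_count n \<tau> = card {p \<in> involutions n. contains_subseq p \<tau>}"

end

theory Submission
  imports Defs "HOL-Combinatorics.Permutations"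
begin

(* An involution \<pi> is its own inverse, so \<pi> contains \<tau> exactly when the positions
   \<pi>(\<tau>_1) < ... < \<pi>(\<tau>_k) increase. By monotonicity, the letters \<tau>_r with \<pi>(\<tau>_r) <= k form
   a prefix \<tau>_1 ... \<tau>_j; \<pi> permutes this prefix and, being increasing on it, must send \<tau>_i
   to the i-th smallest of its letters, which is an involution precisely when the length-j
   initial pattern of \<tau> is one. The letters \<tau>_(j+1), ..., \<tau>_k are matched increasingly with
   a (k-j)-subset B of {k+1..n}, and \<pi> is an arbitrary involution of {k+1..n} - B. This gives
   binomial(n-k, k-j) * t(n-2k+j) involutions for each j in the j-set. *)

definition involutions_on :: "'a set \<Rightarrow> ('a \<Rightarrow> 'a) set" where
  "involutions_on S = {f. (\<forall>x\<in>S. f x \<in> S \<and> f (f x) = x) \<and> (\<forall>x. x \<notin> S \<longrightarrow> f x = x)}"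

lemma involutions_onD:
  assumes "f \<in> involutions_on S"
  shows "x \<in> S \<Longrightarrow> f x \<in> S" and "f (f x) = x" and "x \<notin> S \<Longrightarrow> f x = x"
  using assms unfolding involutions_on_def by (cases "x \<in> S"; simp)+

lemma inj_involutions_on: "f \<in> involutions_on S \<Longrightarrow> inj f"
  by (metis injI involutions_onD(2))

lemma involution_image_eq:
  assumes "\<And>x. f (f x) = x" and "f ` T \<subseteq> T"
  shows "f ` T = T"
proof
  show "T \<subseteq> f ` T"
  proof
    fix x assume "x \<in> T"
    then have "f x \<in> T" and "x = f (f x)"
      using assms by auto
    then show "x \<in> f ` T" by blast
  qed
qed (fact assms(2))

lemma image_involutions_on: "f \<in> involutions_on S \<Longrightarrow> f ` S = S"
  by (rule involution_image_eq) (auto dest: involutions_onD)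

lemma involutions_on_eq_permutes:
  "involutions_on S = {f. f permutes S \<and> (\<forall>x. f (f x) = x)}"
proof (intro set_eqI iffI CollectI conjI allI)
  fix f assume f: "f \<in> involutions_on S"
  show "f (f x) = x" for x
    using involutions_onD(2)[OF f] .
  show "f permutes S"
    unfolding permutes_def
  proof (intro conjI allI impI)
    show "f x = x" if "x \<notin> S" for x
      using involutions_onD(3)[OF f that] .
    show "\<exists>!x. f x = y" for y
    proof (rule ex1I)
      show "f (f y) = y" using involutions_onD(2)[OF f] .
      show "x = f y" if "f x = y" for x
        using that involutions_onD(2)[OF f, of x] by simp
    qed
  qed
next
  fix f assume "f \<in> {f. f permutes S \<and> (\<forall>x. f (f x) = x)}"
  then show "f \<in> involutions_on S"
    by (auto simp: involutions_on_def permutes_in_image permutes_not_in)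
qed

lemma finite_involutions_on: "finite S \<Longrightarrow> finite (involutions_on S)"
  unfolding involutions_on_eq_permutes by (rule finite_subset[OF _ finite_permutations]) auto

lemma card_involutions_on_bij:
  assumes h: "bij_betw h S T"
  shows "card (involutions_on S) = card (involutions_on T)"
proof -
  let ?conj = "\<lambda>\<pi> y. if y \<in> T then h (\<pi> (inv_into S h y)) else y"
  have inj_h: "inj_on h S" and onto: "y \<in> T \<Longrightarrow> \<exists>x\<in>S. y = h x" for y
    using h by (auto simp: bij_betw_def)
  have "(\<forall>y. ?conj \<pi> (?conj \<pi> y) = y) \<longleftrightarrow> (\<forall>x. \<pi> (\<pi> x) = x)" if \<pi>: "\<pi> permutes S" for \<pi>
  proof -
    have conj_conj: "?conj \<pi> (?conj \<pi> (h x)) = h (\<pi> (\<pi> x))" if "x \<in> S" for x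
      using that \<pi> h by (simp add: permutes_in_image bij_betw_apply inv_into_f_f[OF inj_h])
    show ?thesis
    proof
      assume conj: "\<forall>y. ?conj \<pi> (?conj \<pi> y) = y"
      show "\<forall>x. \<pi> (\<pi> x) = x"
      proof
        fix x
        show "\<pi> (\<pi> x) = x"
        proof (cases "x \<in> S")
          case True
          then have "h (\<pi> (\<pi> x)) = h x"
            using conj conj_conj by metis
          then show ?thesis
            using True \<pi> by (simp add: inj_on_eq_iff[OF inj_h] permutes_in_image)
        qed (simp add: permutes_not_in[OF \<pi>])
      qed
    next
      assume "\<forall>x. \<pi> (\<pi> x) = x"
      then show "\<forall>y. ?conj \<pi> (?conj \<pi> y) = y"
        using conj_conj onto by (metis (no_types, lifting))
    qed
  qed
  then have "bij_betw ?conj {\<pi> \<in> {\<pi>. \<pi> permutes S}. \<forall>x. \<pi> (\<pi> x) = x}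
      {\<pi> \<in> {\<pi>. \<pi> permutes T}. \<forall>x. \<pi> (\<pi> x) = x}"
    by (intro bij_betw_Collect[OF bij_betw_permutations[OF h]]) auto
  then show ?thesis
    by (simp add: involutions_on_eq_permutes bij_betw_same_card)
qed

lemma involutions_on_if:
  assumes "\<forall>x\<in>S. f x \<in> S \<and> f (f x) = x" and "g \<in> involutions_on T" and "S \<inter> T = {}"
  shows "(\<lambda>x. if x \<in> S then f x else g x) \<in> involutions_on (S \<union> T)"
  using assms by (auto simp: involutions_on_def)

lemma involutions_on_restrict:
  assumes "f \<in> involutions_on S" and "f ` T \<subseteq> T"
  shows "(\<lambda>x. if x \<in> S - T then f x else x) \<in> involutions_on (S - T)"
  using assms unfolding involutions_on_def by (auto simp: image_subset_iff)

definition swap_along :: "('a \<Rightarrow> 'a) \<Rightarrow> 'a set \<Rightarrow> 'a \<Rightarrow> 'a" where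
  "swap_along m X x = (if x \<in> X then m x else if x \<in> m ` X then inv_into X m x else x)"

lemma swap_along_involutions_on:
  assumes "inj_on m X" and "X \<inter> m ` X = {}"
  shows "swap_along m X \<in> involutions_on (X \<union> m ` X)"
  using assms unfolding involutions_on_def swap_along_def
  by (auto simp: inv_into_into)

definition rank :: "'a::linorder set \<Rightarrow> 'a \<Rightarrow> nat" where
  "rank X x = card {y \<in> X. y \<le> x}"

lemma strict_mono_on_rank: "finite X \<Longrightarrow> strict_mono_on X (rank X)"
proof (rule strict_mono_onI)
  fix x y assume X: "finite X" and xy: "x \<in> X" "y \<in> X" "x < y"
  have "{z \<in> X. z \<le> x} \<subseteq> {z \<in> X. z \<le> y}" and "y \<notin> {z \<in> X. z \<le> x}"
    using xy by auto
  then have "{z \<in> X. z \<le> x} \<subset> {z \<in> X. z \<le> y}"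
    using xy by blast
  then show "rank X x < rank X y"
    unfolding rank_def using X by (auto intro: psubset_card_mono)
qed

lemma rank_image: "finite X \<Longrightarrow> rank X ` X = {1..card X}"
proof (rule card_subset_eq)
  assume X: "finite X"
  show "rank X ` X \<subseteq> {1..card X}"
  proof
    fix r assume "r \<in> rank X ` X"
    then obtain x where "x \<in> X" "r = rank X x" by blast
    moreover have "x \<in> {y \<in> X. y \<le> x}" "{y \<in> X. y \<le> x} \<subseteq> X"
      using \<open>x \<in> X\<close> by auto
    ultimately show "r \<in> {1..card X}"
      unfolding rank_def using X
      by (auto simp: Suc_le_eq card_gt_0_iff intro: card_mono)
  qed
  show "card (rank X ` X) = card {1..card X}"
    using X by (simp add: card_image strict_mono_on_imp_inj_on strict_mono_on_rank)
qed simp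

lemma bij_betw_rank: "finite X \<Longrightarrow> bij_betw (rank X) X {1..card X}"
  by (simp add: bij_betw_def rank_image strict_mono_on_imp_inj_on strict_mono_on_rank)

lemma rank_strict_mono_on:
  assumes h: "strict_mono_on {..<N} h" and i: "i < N"
  shows "rank (h ` {..<N}) (h i) = Suc i"
proof -
  have "{y \<in> h ` {..<N}. y \<le> h i} = h ` {..i}"
    using i strict_mono_on_less_eq[OF h] by (force simp: image_iff)
  moreover have "inj_on h {..i}"
    using i by (intro strict_mono_on_imp_inj_on monotone_on_subset[OF h]) auto
  ultimately show ?thesis
    by (simp add: rank_def card_image)
qed

definition relabel :: "'a list \<Rightarrow> 'a::linorder set \<Rightarrow> 'a \<Rightarrow> 'a" where
  "relabel xs X x = xs ! (rank X x - 1)"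

lemma bij_betw_relabel:
  assumes "finite X" and "distinct xs" and "length xs = card X"
  shows "bij_betw (relabel xs X) X (set xs)"
proof -
  have "bij_betw (\<lambda>r. r - 1) {1..card X} {..<length xs}"
    using assms(3) by (intro bij_betw_byWitness[where f' = Suc]) auto
  moreover have "bij_betw ((!) xs) {..<length xs} (set xs)"
    using assms(2) by (simp add: bij_betw_nth)
  ultimately have "bij_betw ((!) xs \<circ> (\<lambda>r. r - 1) \<circ> rank X) X (set xs)"
    using bij_betw_rank[OF assms(1)] by (blast intro: bij_betw_trans)
  then show ?thesis
    by (simp add: relabel_def[abs_def] comp_def)
qed

lemma rank_eq_if_relabel_eq:
  assumes "finite X" and "distinct xs" and "length xs = card X"
    and "x \<in> X" and "i < length xs" and "relabel xs X x = xs ! i"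
  shows "rank X x = Suc i"
proof -
  have "rank X x \<in> {1..card X}"
    using rank_image[OF assms(1)] assms(4) by blast
  then show ?thesis
    using assms(2,3,5,6) by (auto simp: relabel_def nth_eq_iff_index_eq)
qed

lemma relabel_strict_mono_image:
  assumes "strict_mono_on {..<length xs} (\<lambda>i. f (xs ! i))" and "i < length xs"
  shows "relabel xs (f ` set xs) (f (xs ! i)) = xs ! i"
proof -
  have "set xs = (!) xs ` {..<length xs}"
    using nth_image[of "length xs" xs] by (simp add: atLeast0LessThan)
  then have "f ` set xs = (\<lambda>i. f (xs ! i)) ` {..<length xs}"
    by (simp add: image_image)
  then show ?thesis
    using rank_strict_mono_on[OF assms] by (simp add: relabel_def)
qed

lemma strict_mono_on_nth_take:
  assumes "strict_mono_on {..<length xs} (\<lambda>i. f (xs ! i))"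
  shows "strict_mono_on {..<length (take j xs)} (\<lambda>i. f (take j xs ! i))"
  by (rule strict_mono_onI) (use strict_mono_onD[OF assms] in auto)

lemma strict_mono_on_nth_drop:
  assumes "strict_mono_on {..<length xs} (\<lambda>i. f (xs ! i))"
  shows "strict_mono_on {..<length (drop j xs)} (\<lambda>i. f (drop j xs ! i))"
  by (rule strict_mono_onI) (use strict_mono_onD[OF assms] in auto)

lemma pattern_in_perms:
  assumes "distinct w"
  shows "pattern w \<in> perms (length w)"
proof -
  have "pattern w = map (rank (set w)) w"
    by (simp add: pattern_def rank_def)
  then show ?thesis
    using assms bij_betw_rank[of "set w"]
    by (simp add: perms_def distinct_map bij_betw_def distinct_card)
qed

lemma is_involution_pattern_iff:
  assumes w: "distinct w"
  shows "is_involution (pattern w) \<longleftrightarrow>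
    (\<forall>x\<in>set w. relabel w (set w) (relabel w (set w) x) = x)"
proof -
  let ?\<sigma> = "pattern w" and ?rel = "relabel w (set w)"
  have \<sigma>: "?\<sigma> ! i = rank (set w) (w ! i)" "?\<sigma> ! i \<in> {1..length w}" if "i < length w" for i
    using that pattern_in_perms[OF w]
    by (auto simp: pattern_def rank_def perms_def)
  have "?rel (?rel (w ! i)) = w ! i \<longleftrightarrow> ?\<sigma> ! (?\<sigma> ! i - 1) = Suc i" if i: "i < length w" for i
  proof -
    have "?\<sigma> ! i - 1 < length w"
      using \<sigma>(2)[OF i] by auto
    then have "?rel (?rel (w ! i)) = w ! (?\<sigma> ! (?\<sigma> ! i - 1) - 1)"
      "?\<sigma> ! (?\<sigma> ! i - 1) \<in> {1..length w}"
      using i \<sigma> by (simp_all add: relabel_def)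
    then show ?thesis
      using i w by (auto simp: nth_eq_iff_index_eq)
  qed
  moreover have "length ?\<sigma> = length w"
    by (simp add: pattern_def)
  ultimately show ?thesis
    unfolding is_involution_def by (metis Suc_eq_plus1 in_set_conv_nth)
qed

lemma downward_closed_eq_lessThan:
  fixes D :: "nat set"
  assumes "finite D" and "\<And>r s. s \<in> D \<Longrightarrow> r < s \<Longrightarrow> r \<in> D"
  shows "D = {..<card D}"
proof (rule card_subset_eq)
  show "D \<subseteq> {..<card D}"
  proof
    fix s assume "s \<in> D"
    then have "{..s} \<subseteq> D"
      using assms(2) by (auto simp: order.order_iff_strict)
    then have "card {..s} \<le> card D"
      using assms(1) by (rule card_mono[rotated])
    then show "s \<in> {..<card D}" by simp
  qed
qed simp_all

definition perm_fun :: "nat list \<Rightarrow> nat \<Rightarrow> nat" where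
  "perm_fun p x = (if x \<in> {1..length p} then p ! (x - 1) else x)"

lemma perm_fun_involutions_on:
  assumes "p \<in> involutions n"
  shows "perm_fun p \<in> involutions_on {1..n}"
proof -
  have p: "length p = n" "set p = {1..n}" "\<And>i. i < n \<Longrightarrow> p ! (p ! i - 1) = Suc i"
    using assms by (auto simp: involutions_def perms_def is_involution_def)
  have "p ! i \<in> {1..n}" if "i < n" for i
    using that p(1,2) nth_mem by blast
  then show ?thesis
    using p by (auto simp: involutions_on_def perm_fun_def)
qed

lemma perm_fun_map:
  assumes f: "f \<in> involutions_on {1..n}"
  shows "perm_fun (map (\<lambda>i. f (Suc i)) [0..<n]) = f"
proof
  fix x
  show "perm_fun (map (\<lambda>i. f (Suc i)) [0..<n]) x = f x"
  proof (cases "x \<in> {1..n}")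
    case True
    then have "x - 1 < n" "Suc (x - 1) = x" by auto
    with True show ?thesis by (simp add: perm_fun_def)
  next
    case False
    then show ?thesis
      using involutions_onD(3)[OF f False] by (simp add: perm_fun_def del: atLeastAtMost_iff)
  qed
qed

lemma map_involutions_on:
  assumes f: "f \<in> involutions_on {1..n}"
  shows "map (\<lambda>i. f (Suc i)) [0..<n] \<in> involutions n"
proof -
  let ?p = "map (\<lambda>i. f (Suc i)) [0..<n]"
  have "Suc ` {0..<n} = {1..n}"
    by (simp add: image_Suc_atLeastLessThan atLeastLessThanSuc_atLeastAtMost)
  then have "set ?p = {1..n}"
    unfolding set_map set_upt image_image[of f Suc, symmetric] using image_involutions_on[OF f]
    by simp
  moreover have "inj_on (\<lambda>i. f (Suc i)) {0..<n}"
    using inj_involutions_on[OF f] by (auto intro!: inj_onI dest: injD)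
  then have "distinct ?p"
    by (simp add: distinct_map)
  moreover have "?p ! (?p ! i - 1) = Suc i" if "i < n" for i
  proof -
    have "f (Suc i) \<in> {1..n}"
      using that involutions_onD(1)[OF f] by simp
    then have "f (Suc i) - 1 < n" and "Suc (f (Suc i) - 1) = f (Suc i)"
      by auto
    then have "?p ! (?p ! i - 1) = f (f (Suc i))"
      using that by simp
    then show ?thesis
      using involutions_onD(2)[OF f] by simp
  qed
  ultimately show ?thesis
    by (simp add: involutions_def perms_def is_involution_def)
qed

lemma bij_betw_perm_fun: "bij_betw perm_fun (involutions n) (involutions_on {1..n})"
proof (rule bij_betw_byWitness[where f' = "\<lambda>f. map (\<lambda>i. f (Suc i)) [0..<n]"])
  show "\<forall>p\<in>involutions n. map (\<lambda>i. perm_fun p (Suc i)) [0..<n] = p"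
    by (auto simp: involutions_def perms_def perm_fun_def intro: nth_equalityI)
  show "\<forall>f\<in>involutions_on {1..n}. perm_fun (map (\<lambda>i. f (Suc i)) [0..<n]) = f"
    using perm_fun_map by blast
  show "perm_fun ` involutions n \<subseteq> involutions_on {1..n}"
    using perm_fun_involutions_on by blast
  show "(\<lambda>f. map (\<lambda>i. f (Suc i)) [0..<n]) ` involutions_on {1..n} \<subseteq> involutions n"
    using map_involutions_on by blast
qed

lemma card_involutions_on:
  assumes "finite S"
  shows "card (involutions_on S) = t (card S)"
proof -
  obtain h where "bij_betw h S {1..card S}"
    using finite_same_card_bij[OF assms, of "{1..card S}"] by auto
  then have "card (involutions_on S) = card (involutions_on {1..card S})"
    by (rule card_involutions_on_bij)
  also have "\<dots> = t (card S)"
    unfolding t_def by (rule bij_betw_same_card[OF bij_betw_perm_fun, symmetric])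
  finally show ?thesis .
qed

(* For an involution p, perm_fun p x is the position of the letter x in p. *)

lemma contains_subseq_iff_strict_mono_on:
  assumes p: "p \<in> involutions n" and \<tau>: "set \<tau> \<subseteq> {1..n}"
  shows "contains_subseq p \<tau> \<longleftrightarrow> strict_mono_on {..<length \<tau>} (\<lambda>r. perm_fun p (\<tau> ! r))"
proof -
  have f: "perm_fun p \<in> involutions_on {1..n}"
    using perm_fun_involutions_on[OF p] .
  have nth_p: "p ! i = perm_fun p (Suc i)" if "i < n" for i
    using that p by (simp add: perm_fun_def involutions_def perms_def)
  have \<tau>_range: "perm_fun p (\<tau> ! r) \<in> {1..n}" if "r < length \<tau>" for r
    using that \<tau> involutions_onD(1)[OF f] nth_mem by blast
  show ?thesis
  proof
    assume "contains_subseq p \<tau>"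
    then obtain "is" where len: "length is = length \<tau>" and sorted: "sorted_wrt (<) is"
      and at: "\<And>r. r < length \<tau> \<Longrightarrow> is ! r < n \<and> p ! (is ! r) = \<tau> ! r"
      using p by (auto simp: contains_subseq_def involutions_def perms_def)
    have "perm_fun p (\<tau> ! r) = Suc (is ! r)" if "r < length \<tau>" for r
      using at[OF that] nth_p involutions_onD(2)[OF f] by metis
    then show "strict_mono_on {..<length \<tau>} (\<lambda>r. perm_fun p (\<tau> ! r))"
      using sorted len by (auto intro!: strict_mono_onI simp: sorted_wrt_iff_nth_less)
  next
    assume mono: "strict_mono_on {..<length \<tau>} (\<lambda>r. perm_fun p (\<tau> ! r))"
    define "is" where "is = map (\<lambda>r. perm_fun p (\<tau> ! r) - 1) [0..<length \<tau>]"
    have is_nth: "Suc (is ! r) = perm_fun p (\<tau> ! r)" "is ! r < n" if "r < length \<tau>" for r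
      using that \<tau>_range[OF that] by (auto simp: is_def)
    have "sorted_wrt (<) is"
      unfolding sorted_wrt_iff_nth_less
    proof (intro allI impI)
      fix i j assume ij: "i < j" "j < length is"
      then have "i < length \<tau>" "j < length \<tau>"
        by (auto simp: is_def)
      moreover from this have "perm_fun p (\<tau> ! i) < perm_fun p (\<tau> ! j)"
        using ij(1) by (auto intro: strict_mono_onD[OF mono])
      ultimately show "is ! i < is ! j"
        using is_nth(1) by (metis Suc_less_SucD)
    qed
    moreover have "p ! (is ! r) = \<tau> ! r" if "r < length \<tau>" for r
      using that is_nth nth_p involutions_onD(2)[OF f] by metis
    ultimately show "contains_subseq p \<tau>"
      using is_nth p unfolding contains_subseq_def
      by (intro exI[of _ "is"]) (auto simp: is_def involutions_def perms_def)
  qed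
qed

locale involution_pattern =
  fixes \<tau> :: "nat list" and k n :: nat
  assumes perm: "\<tau> \<in> perms k" and k_le_n: "k \<le> n"
begin

lemma length_\<tau>: "length \<tau> = k" and distinct_\<tau>: "distinct \<tau>" and set_\<tau>: "set \<tau> = {1..k}"
  using perm by (auto simp: perms_def)

abbreviation head :: "nat \<Rightarrow> nat set" where
  "head j \<equiv> set (take j \<tau>)"

abbreviation tail :: "nat \<Rightarrow> nat set" where
  "tail j \<equiv> set (drop j \<tau>)"

abbreviation upper :: "nat set" where
  "upper \<equiv> {k<..n}"

abbreviation head_map :: "nat \<Rightarrow> nat \<Rightarrow> nat" where
  "head_map j \<equiv> relabel (take j \<tau>) (head j)"

abbreviation tail_map :: "nat \<Rightarrow> nat set \<Rightarrow> nat \<Rightarrow> nat" where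
  "tail_map j B \<equiv> relabel (drop j \<tau>) B"

lemma head_eq_image: "j \<le> k \<Longrightarrow> head j = (!) \<tau> ` {..<j}"
  using nth_image[of j \<tau>] length_\<tau> by (simp add: atLeast0LessThan)

lemma nth_in_head:
  assumes "r < j" and "r < k"
  shows "\<tau> ! r \<in> head j"
proof -
  have "take j \<tau> ! r = \<tau> ! r" and "r < length (take j \<tau>)"
    using assms length_\<tau> by simp_all
  then show ?thesis
    by (metis nth_mem)
qed

lemma nth_in_tail:
  assumes "j \<le> r" and "r < k"
  shows "\<tau> ! r \<in> tail j"
proof -
  have "drop j \<tau> ! (r - j) = \<tau> ! r" and "r - j < length (drop j \<tau>)"
    using assms length_\<tau> by simp_all
  then show ?thesis
    by (metis nth_mem)
qed

lemma head_Un_tail: "head j \<union> tail j = {1..k}"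
  using set_\<tau> by (metis append_take_drop_id set_append)

lemma head_subset: "head j \<subseteq> {1..k}"
  using head_Un_tail by blast

lemma tail_subset: "tail j \<subseteq> {1..k}"
  using head_Un_tail by blast

lemma upper_disjoint: "upper \<inter> {1..k} = {}"
  by auto

lemma head_or_tail: "x \<in> {1..k} \<Longrightarrow> x \<in> head j \<or> x \<in> tail j"
  using head_Un_tail[of j] by (metis Un_iff)

lemma head_tail_disjoint: "head j \<inter> tail j = {}"
  using distinct_\<tau> by (simp add: set_take_disj_set_drop_if_distinct)

lemma card_head: "j \<le> k \<Longrightarrow> card (head j) = j"
  using distinct_\<tau> length_\<tau> by (simp add: distinct_card)

lemma card_tail: "card (tail j) = k - j"
  using distinct_\<tau> length_\<tau> by (simp add: distinct_card)

lemma range_split: "{1..n} = {1..k} \<union> upper"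
  using k_le_n by auto

definition admissible :: "(nat \<Rightarrow> nat) set" where
  "admissible = {f \<in> involutions_on {1..n}. strict_mono_on {..<k} (\<lambda>r. f (\<tau> ! r))}"

definition low :: "(nat \<Rightarrow> nat) \<Rightarrow> nat set" where
  "low f = {x \<in> {1..k}. f x \<le> k}"

definition level :: "nat \<Rightarrow> (nat \<Rightarrow> nat) set" where
  "level j = {f \<in> admissible. card (low f) = j}"

lemma low_eq_head:
  assumes "f \<in> admissible"
  shows "low f = head (card (low f))"
proof -
  have mono: "strict_mono_on {..<k} (\<lambda>r. f (\<tau> ! r))"
    using assms by (simp add: admissible_def)
  define D where "D = {r. r < k \<and> f (\<tau> ! r) \<le> k}"
  have "D = {..<card D}"
  proof (rule downward_closed_eq_lessThan)
    show "finite D"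
      by (simp add: D_def)
    show "r \<in> D" if "s \<in> D" and "r < s" for r s
      using that strict_mono_onD[OF mono, of r s] by (auto simp: D_def)
  qed
  moreover have "low f = (!) \<tau> ` D"
    using head_eq_image[of k] set_\<tau> length_\<tau> by (auto simp: low_def D_def)
  moreover have "inj_on ((!) \<tau>) D"
    using distinct_\<tau> length_\<tau> by (intro inj_on_nth) (auto simp: D_def)
  moreover have "card D \<le> k"
    using card_mono[of "{..<k}" D] by (auto simp: D_def)
  ultimately show ?thesis
    using head_eq_image by (metis card_image)
qed

lemma levelD:
  assumes "f \<in> level j"
  shows "j \<le> k" and "low f = head j" and "f \<in> involutions_on {1..n}"
    and "strict_mono_on {..<length \<tau>} (\<lambda>r. f (\<tau> ! r))"
proof -
  have "card (low f) \<le> card {1..k}"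
    by (rule card_mono) (auto simp: low_def)
  then show "j \<le> k"
    using assms by (simp add: level_def)
  show "low f = head j"
    using assms low_eq_head by (auto simp: level_def)
  show "f \<in> involutions_on {1..n}" and "strict_mono_on {..<length \<tau>} (\<lambda>r. f (\<tau> ! r))"
    using assms by (simp_all add: level_def admissible_def length_\<tau>)
qed

lemma level_image_head:
  assumes f: "f \<in> level j"
  shows "f ` head j = head j"
proof (rule involution_image_eq)
  note inv = levelD(3)[OF f]
  show "f (f x) = x" for x
    using involutions_onD(2)[OF inv] .
  show "f ` head j \<subseteq> head j"
  proof
    fix y assume "y \<in> f ` head j"
    then obtain x where x: "x \<in> low f" and y: "y = f x"
      using levelD(2)[OF f] by blast
    then have "y \<in> {1..n}" and "y \<le> k" and "f y \<le> k"
      using involutions_onD[OF inv] k_le_n by (auto simp: low_def)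
    then have "y \<in> low f"
      by (simp add: low_def)
    then show "y \<in> head j"
      using levelD(2)[OF f] by simp
  qed
qed

lemma level_tail_upper:
  assumes f: "f \<in> level j" and x: "x \<in> tail j"
  shows "f x \<in> upper"
proof -
  have "x \<in> {1..k}" and "x \<notin> low f"
    using x tail_subset[of j] head_tail_disjoint[of j] levelD(2)[OF f] by blast+
  then show ?thesis
    using involutions_onD(1)[OF levelD(3)[OF f], of x] k_le_n by (auto simp: low_def)
qed

lemma level_head_map:
  assumes f: "f \<in> level j" and x: "x \<in> head j"
  shows "head_map j x = f x"
proof -
  have "f x \<in> head j"
    using x level_image_head[OF f] by blast
  then obtain i where i: "i < length (take j \<tau>)" and fx: "f x = take j \<tau> ! i"
    by (auto simp: in_set_conv_nth)
  have "relabel (take j \<tau>) (f ` head j) (f (take j \<tau> ! i)) = take j \<tau> ! i"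
    using relabel_strict_mono_image[OF strict_mono_on_nth_take[OF levelD(4)[OF f]] i] .
  then show ?thesis
    using fx level_image_head[OF f] involutions_onD(2)[OF levelD(3)[OF f], of x] by simp
qed

lemma level_tail_map:
  assumes f: "f \<in> level j" and x: "x \<in> tail j"
  shows "tail_map j (f ` tail j) (f x) = x"
proof -
  obtain i where "i < length (drop j \<tau>)" and "x = drop j \<tau> ! i"
    using x by (auto simp: in_set_conv_nth)
  then show ?thesis
    using relabel_strict_mono_image[OF strict_mono_on_nth_drop[OF levelD(4)[OF f]]] by simp
qed

lemma jset_iff: "j \<in> jset \<tau> \<longleftrightarrow> j \<le> k \<and> (\<forall>x\<in>head j. head_map j (head_map j x) = x)"
proof (cases "j \<le> k")
  case True
  then have "length (take j \<tau>) = j"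
    using length_\<tau> by simp
  then have "pattern (take j \<tau>) \<in> involutions j \<longleftrightarrow> (\<forall>x\<in>head j. head_map j (head_map j x) = x)"
    using pattern_in_perms[of "take j \<tau>"] is_involution_pattern_iff[of "take j \<tau>"] distinct_\<tau>
    by (simp add: involutions_def)
  then show ?thesis
    using True by (auto simp: jset_def initial_pattern_def length_\<tau>)
qed (auto simp: jset_def length_\<tau>)

lemma level_jset:
  assumes f: "f \<in> level j"
  shows "j \<in> jset \<tau>"
proof -
  have "head_map j (head_map j x) = x" if "x \<in> head j" for x
    using that level_head_map[OF f] level_image_head[OF f] involutions_onD(2)[OF levelD(3)[OF f]]
    by (metis imageI)
  then show ?thesis
    using jset_iff levelD(1)[OF f] by blast
qed

lemma bij_betw_tail_map:
  assumes "B \<subseteq> upper" and "card B = k - j"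
  shows "bij_betw (tail_map j B) B (tail j)"
proof -
  have "finite B"
    using assms(1) finite_subset by blast
  then show ?thesis
    using bij_betw_relabel[of B "drop j \<tau>"] distinct_\<tau> length_\<tau> assms(2) by simp
qed

lemma head_map_involutive:
  assumes "j \<in> jset \<tau>" and "x \<in> head j"
  shows "head_map j x \<in> head j" and "head_map j (head_map j x) = x"
proof -
  have "bij_betw (head_map j) (head j) (head j)"
    using bij_betw_relabel[of "head j" "take j \<tau>"] distinct_\<tau> by (simp add: distinct_card)
  then show "head_map j x \<in> head j"
    using assms(2) by (simp add: bij_betw_apply)
  show "head_map j (head_map j x) = x"
    using assms jset_iff by blast
qed

definition components :: "nat \<Rightarrow> (nat set \<times> (nat \<Rightarrow> nat)) set" where
  "components j = (SIGMA B:{B. B \<subseteq> upper \<and> card B = k - j}. involutions_on (upper - B))"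

definition assemble :: "nat \<Rightarrow> nat set \<Rightarrow> (nat \<Rightarrow> nat) \<Rightarrow> nat \<Rightarrow> nat" where
  "assemble j B g x =
    (if x \<in> head j then head_map j x
     else if x \<in> B \<union> tail j then swap_along (tail_map j B) B x
     else g x)"

definition decompose :: "nat \<Rightarrow> (nat \<Rightarrow> nat) \<Rightarrow> nat set \<times> (nat \<Rightarrow> nat)" where
  "decompose j f = (f ` tail j, \<lambda>x. if x \<in> upper - f ` tail j then f x else x)"

context
  fixes j :: nat and B :: "nat set" and g :: "nat \<Rightarrow> nat"
  assumes j: "j \<in> jset \<tau>" and B: "B \<subseteq> upper" "card B = k - j"
    and g: "g \<in> involutions_on (upper - B)"
begin

lemma B_tail_disjoint: "B \<inter> tail j = {}"
  using B(1) tail_subset[of j] upper_disjoint by blast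

lemma assemble_tail:
  assumes x: "x \<in> tail j"
  shows "assemble j B g x = inv_into B (tail_map j B) x"
proof -
  have "x \<notin> head j" and "x \<notin> B"
    using x head_tail_disjoint[of j] B_tail_disjoint by auto
  moreover have "x \<in> tail_map j B ` B"
    using x bij_betw_tail_map[OF B] by (simp add: bij_betw_def)
  ultimately show ?thesis
    using x by (simp add: assemble_def swap_along_def)
qed

lemma assemble_tail_in: "x \<in> tail j \<Longrightarrow> assemble j B g x \<in> B"
  using assemble_tail bij_betw_tail_map[OF B] by (simp add: bij_betw_def inv_into_into)

lemma tail_map_assemble: "x \<in> tail j \<Longrightarrow> tail_map j B (assemble j B g x) = x"
  using assemble_tail bij_betw_tail_map[OF B] by (simp add: bij_betw_def f_inv_into_f)

lemma assemble_involutions_on: "assemble j B g \<in> involutions_on {1..n}"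
proof -
  have swap: "swap_along (tail_map j B) B \<in> involutions_on (B \<union> tail j)"
    using swap_along_involutions_on[of "tail_map j B" B] bij_betw_tail_map[OF B] B_tail_disjoint
    by (simp add: bij_betw_def)
  have swap_pointwise: "\<forall>x\<in>B \<union> tail j. swap_along (tail_map j B) B x \<in> B \<union> tail j \<and>
      swap_along (tail_map j B) B (swap_along (tail_map j B) B x) = x"
    using involutions_onD(1,2)[OF swap] by blast
  have disjoint_inner: "(B \<union> tail j) \<inter> (upper - B) = {}"
    using tail_subset[of j] upper_disjoint by blast
  have inner: "(\<lambda>x. if x \<in> B \<union> tail j then swap_along (tail_map j B) B x else g x)
      \<in> involutions_on ((B \<union> tail j) \<union> (upper - B))"
    by (rule involutions_on_if[OF swap_pointwise g disjoint_inner])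
  have head_pointwise: "\<forall>x\<in>head j. head_map j x \<in> head j \<and> head_map j (head_map j x) = x"
    using head_map_involutive[OF j] by blast
  have disjoint_outer: "head j \<inter> ((B \<union> tail j) \<union> (upper - B)) = {}"
    using head_tail_disjoint[of j] head_subset[of j] B(1) upper_disjoint by blast
  have "(\<lambda>x. if x \<in> head j then head_map j x
      else if x \<in> B \<union> tail j then swap_along (tail_map j B) B x else g x)
      \<in> involutions_on (head j \<union> ((B \<union> tail j) \<union> (upper - B)))"
    by (rule involutions_on_if[OF head_pointwise inner disjoint_outer])
  moreover have "head j \<union> ((B \<union> tail j) \<union> (upper - B)) = {1..n}"
    using head_Un_tail[of j] range_split B(1) by auto
  ultimately show ?thesis
    by (simp add: assemble_def[abs_def])
qed

lemma rank_assemble_head: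
  assumes "r < j"
  shows "rank (head j) (assemble j B g (\<tau> ! r)) = Suc r"
proof -
  have jk: "j \<le> k"
    using j jset_iff by blast
  have x: "\<tau> ! r \<in> head j"
    using assms jk nth_in_head by simp
  have "head_map j (head_map j (\<tau> ! r)) = take j \<tau> ! r"
    using head_map_involutive(2)[OF j x] assms by simp
  then have "rank (head j) (head_map j (\<tau> ! r)) = Suc r"
    using rank_eq_if_relabel_eq[of "head j" "take j \<tau>"] head_map_involutive(1)[OF j x]
      distinct_\<tau> jk length_\<tau> assms by (simp add: distinct_card)
  then show ?thesis
    using x by (simp add: assemble_def)
qed

lemma rank_assemble_tail:
  assumes "j \<le> r" and "r < k"
  shows "rank B (assemble j B g (\<tau> ! r)) = Suc (r - j)"
proof -
  have x: "\<tau> ! r \<in> tail j"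
    using assms nth_in_tail by simp
  have "tail_map j B (assemble j B g (\<tau> ! r)) = drop j \<tau> ! (r - j)"
    using tail_map_assemble[OF x] assms length_\<tau> by simp
  then show ?thesis
    using rank_eq_if_relabel_eq[of B "drop j \<tau>"] assemble_tail_in[OF x] B finite_subset[OF B(1)]
      distinct_\<tau> length_\<tau> assms by simp
qed

lemma assemble_strict_mono: "strict_mono_on {..<k} (\<lambda>r. assemble j B g (\<tau> ! r))"
proof (rule strict_mono_onI)
  fix r s assume "r \<in> {..<k}" and "s \<in> {..<k}" and "r < s"
  then have rs: "r < k" "s < k" "r < s" by auto
  have finB: "finite B"
    using B(1) finite_subset by blast
  have in_head: "assemble j B g (\<tau> ! i) \<in> head j" if "i < j" "i < k" for i
    using head_map_involutive(1)[OF j nth_in_head[OF that]] nth_in_head[OF that]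
    by (simp add: assemble_def)
  have in_B: "assemble j B g (\<tau> ! i) \<in> B" if "j \<le> i" "i < k" for i
    using assemble_tail_in nth_in_tail that by simp
  consider "s < j" | "r < j" "j \<le> s" | "j \<le> r"
    using rs by linarith
  then show "assemble j B g (\<tau> ! r) < assemble j B g (\<tau> ! s)"
  proof cases
    case 1
    then have "assemble j B g (\<tau> ! r) \<in> head j" and "assemble j B g (\<tau> ! s) \<in> head j"
      using in_head rs by simp_all
    moreover have "rank (head j) (assemble j B g (\<tau> ! r)) < rank (head j) (assemble j B g (\<tau> ! s))"
      using rank_assemble_head[of r] rank_assemble_head[of s] 1 rs by simp
    ultimately show ?thesis
      using strict_mono_on_less[OF strict_mono_on_rank[of "head j"]] by simp
  next
    case 2
    then have "assemble j B g (\<tau> ! r) \<in> {1..k}" and "assemble j B g (\<tau> ! s) \<in> upper"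
      using in_head[of r] in_B[of s] head_subset[of j] B(1) rs by auto
    then show ?thesis by simp
  next
    case 3
    then have "assemble j B g (\<tau> ! r) \<in> B" and "assemble j B g (\<tau> ! s) \<in> B"
      using in_B rs by simp_all
    moreover have "rank B (assemble j B g (\<tau> ! r)) < rank B (assemble j B g (\<tau> ! s))"
      using rank_assemble_tail[of r] rank_assemble_tail[of s] 3 rs by simp
    ultimately show ?thesis
      using strict_mono_on_less[OF strict_mono_on_rank[OF finB]] by simp
  qed
qed

lemma low_assemble: "low (assemble j B g) = head j"
proof -
  have "assemble j B g x \<le> k" if "x \<in> head j" for x
    using head_map_involutive(1)[OF j that] head_subset[of j] that by (force simp: assemble_def)
  moreover have "\<not> assemble j B g x \<le> k" if "x \<in> tail j" for x
    using assemble_tail_in[OF that] B(1) by auto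
  ultimately show ?thesis
    using head_or_tail[of _ j] head_subset[of j] by (auto simp: low_def)
qed

lemma assemble_level: "assemble j B g \<in> level j"
  using assemble_involutions_on assemble_strict_mono low_assemble card_head j jset_iff
  by (simp add: level_def admissible_def)

lemma decompose_assemble: "decompose j (assemble j B g) = (B, g)"
proof -
  have "assemble j B g ` tail j = inv_into B (tail_map j B) ` tail j"
    using assemble_tail by simp
  also have "\<dots> = B"
    using bij_betw_inv_into[OF bij_betw_tail_map[OF B]] by (simp add: bij_betw_def)
  finally have image: "assemble j B g ` tail j = B" .
  have "(if x \<in> upper - B then assemble j B g x else x) = g x" for x
  proof (cases "x \<in> upper - B")
    case True
    then have "x \<notin> head j" and "x \<notin> B \<union> tail j"
      using head_subset[of j] tail_subset[of j] upper_disjoint by blast+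
    then show ?thesis
      using True by (simp add: assemble_def)
  next
    case False
    then show ?thesis
      by (subst if_not_P[OF False]) (simp add: involutions_onD(3)[OF g False])
  qed
  then show ?thesis
    by (simp add: decompose_def image)
qed

end

context
  fixes j :: nat and f :: "nat \<Rightarrow> nat"
  assumes f: "f \<in> level j"
begin

lemma level_image_matched: "f ` ({1..k} \<union> f ` tail j) \<subseteq> {1..k} \<union> f ` tail j"
proof
  fix y assume "y \<in> f ` ({1..k} \<union> f ` tail j)"
  then obtain x where x: "x \<in> {1..k} \<union> f ` tail j" and y: "y = f x"
    by blast
  consider "x \<in> head j" | "x \<in> tail j" | "x \<in> f ` tail j"
    using x head_or_tail[of x j] by blast
  then show "y \<in> {1..k} \<union> f ` tail j"
  proof cases
    case 1
    then show ?thesis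
      using y level_image_head[OF f] head_subset[of j] by blast
  next
    case 2
    then show ?thesis
      using y by blast
  next
    case 3
    then obtain c where "c \<in> tail j" and "x = f c"
      by blast
    then have "y \<in> tail j"
      using y involutions_onD(2)[OF levelD(3)[OF f], of c] by simp
    then show ?thesis
      using tail_subset[of j] by blast
  qed
qed

lemma decompose_level: "decompose j f \<in> components j"
proof -
  note inv = levelD(3)[OF f]
  have B: "f ` tail j \<subseteq> upper"
    using level_tail_upper[OF f] by blast
  have inj: "inj_on f (tail j)"
    using inj_involutions_on[OF inv] by (rule inj_on_subset) simp
  have card: "card (f ` tail j) = k - j"
    unfolding card_image[OF inj] by (rule card_tail)
  have "{1..n} - ({1..k} \<union> f ` tail j) = upper - f ` tail j"
    unfolding range_split using B upper_disjoint by blast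
  then have "(\<lambda>x. if x \<in> upper - f ` tail j then f x else x) \<in> involutions_on (upper - f ` tail j)"
    using involutions_on_restrict[OF inv level_image_matched] by metis
  then show ?thesis
    unfolding decompose_def components_def using B card by (intro SigmaI) simp_all
qed

lemma swap_along_level:
  assumes x: "x \<in> tail j \<union> f ` tail j"
  shows "swap_along (tail_map j (f ` tail j)) (f ` tail j) x = f x"
proof -
  let ?B = "f ` tail j"
  note inv = levelD(3)[OF f]
  have B: "?B \<subseteq> upper"
    using level_tail_upper[OF f] by blast
  have bij: "bij_betw (tail_map j ?B) ?B (tail j)"
    using decompose_level bij_betw_tail_map by (simp add: decompose_def components_def)
  from x consider "x \<in> tail j" | "x \<in> ?B"
    by blast
  then show ?thesis
  proof cases
    case 1
    then have "x \<notin> ?B" and "f x \<in> ?B" and "x \<in> tail_map j ?B ` ?B"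
      using tail_subset[of j] B upper_disjoint bij by (blast, blast, simp add: bij_betw_def)
    moreover have "inv_into ?B (tail_map j ?B) x = f x"
      using level_tail_map[OF f 1] \<open>f x \<in> ?B\<close> bij by (simp add: bij_betw_def inv_into_f_eq)
    ultimately show ?thesis
      by (simp add: swap_along_def)
  next
    case 2
    then obtain c where c: "c \<in> tail j" and "x = f c"
      by blast
    then have "tail_map j ?B x = f x"
      using level_tail_map[OF f c] involutions_onD(2)[OF inv] by simp
    then show ?thesis
      using 2 by (simp add: swap_along_def)
  qed
qed

lemma assemble_decompose: "case_prod (assemble j) (decompose j f) = f"
proof
  fix x
  let ?B = "f ` tail j"
  have B: "?B \<subseteq> upper"
    using level_tail_upper[OF f] by blast
  consider "x \<in> head j" | "x \<in> tail j \<union> ?B" | "x \<notin> {1..k} \<union> ?B"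
    using head_or_tail[of x j] by blast
  then show "case_prod (assemble j) (decompose j f) x = f x"
  proof cases
    case 1
    then show ?thesis
      using level_head_map[OF f] by (simp add: decompose_def assemble_def)
  next
    case 2
    then have "x \<notin> head j"
      using head_tail_disjoint[of j] head_subset[of j] B upper_disjoint by blast
    then show ?thesis
      using 2 swap_along_level[OF 2] by (simp add: decompose_def assemble_def Un_commute)
  next
    case 3
    then have "x \<notin> head j" "x \<notin> ?B \<union> tail j"
      using head_subset[of j] tail_subset[of j] by blast+
    moreover have "x \<notin> upper - ?B \<Longrightarrow> f x = x"
      using 3 k_le_n involutions_onD(3)[OF levelD(3)[OF f]] by auto
    ultimately show ?thesis
      by (auto simp: decompose_def assemble_def)
  qed
qed

end

lemma bij_betw_assemble:
  assumes "j \<in> jset \<tau>"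
  shows "bij_betw (case_prod (assemble j)) (components j) (level j)"
proof (rule bij_betw_byWitness[where f' = "decompose j"])
  show "\<forall>a\<in>components j. decompose j (case_prod (assemble j) a) = a"
    using decompose_assemble[OF assms] by (auto simp: components_def)
  show "\<forall>f\<in>level j. case_prod (assemble j) (decompose j f) = f"
    using assemble_decompose by blast
  show "case_prod (assemble j) ` components j \<subseteq> level j"
    using assemble_level[OF assms] by (auto simp: components_def)
  show "decompose j ` level j \<subseteq> components j"
    using decompose_level by blast
qed

lemma card_components:
  assumes "j \<le> k"
  shows "card (components j) = ((n - k) choose (k - j)) * t (n + j - 2 * k)"
proof -
  let ?Bs = "{B. B \<subseteq> upper \<and> card B = k - j}"
  have fiber: "card (involutions_on (upper - B)) = t (n - k - (k - j))" if "B \<in> ?Bs" for B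
  proof -
    have "finite B"
      using that finite_subset[of B upper] by simp
    then have "card (upper - B) = n - k - (k - j)"
      using that by (simp add: card_Diff_subset)
    then show ?thesis
      using card_involutions_on[of "upper - B"] by simp
  qed
  have "finite ?Bs"
    by (rule finite_subset[of _ "Pow upper"]) auto
  then have "card (components j) = (\<Sum>B\<in>?Bs. card (involutions_on (upper - B)))"
    unfolding components_def by (rule card_SigmaI) (simp add: finite_involutions_on)
  also have "\<dots> = (\<Sum>B\<in>?Bs. t (n - k - (k - j)))"
    by (rule sum.cong) (simp_all add: fiber)
  also have "\<dots> = ((n - k) choose (k - j)) * t (n - k - (k - j))"
    using n_subsets[of upper "k - j"] by simp
  also have "\<dots> = ((n - k) choose (k - j)) * t (n + j - 2 * k)"
  proof (cases "k - j \<le> n - k")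
    case True
    then have "n - k - (k - j) = n + j - 2 * k"
      using assms k_le_n by arith
    then show ?thesis by simp
  qed simp
  finally show ?thesis .
qed

lemma card_admissible:
  "card admissible = (\<Sum>j\<in>jset \<tau>. ((n - k) choose (k - j)) * t (n + j - 2 * k))"
proof -
  have "admissible = (\<Union>j\<in>jset \<tau>. level j)"
  proof
    show "admissible \<subseteq> (\<Union>j\<in>jset \<tau>. level j)"
    proof
      fix f assume "f \<in> admissible"
      then have "f \<in> level (card (low f))"
        by (simp add: level_def)
      then show "f \<in> (\<Union>j\<in>jset \<tau>. level j)"
        using level_jset by blast
    qed
  qed (auto simp: level_def)
  moreover have "card (\<Union>j\<in>jset \<tau>. level j) = (\<Sum>j\<in>jset \<tau>. card (level j))"
  proof (rule card_UN_disjoint)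
    show "finite (jset \<tau>)"
      by (rule finite_subset[of _ "{..k}"]) (use jset_iff in auto)
    show "\<forall>j\<in>jset \<tau>. finite (level j)"
      using finite_subset[OF _ finite_involutions_on[of "{1..n}"]]
      by (auto simp: level_def admissible_def)
    show "\<forall>i\<in>jset \<tau>. \<forall>j\<in>jset \<tau>. i \<noteq> j \<longrightarrow> level i \<inter> level j = {}"
      by (auto simp: level_def)
  qed
  ultimately have "card admissible = (\<Sum>j\<in>jset \<tau>. card (level j))"
    by simp
  also have "\<dots> = (\<Sum>j\<in>jset \<tau>. ((n - k) choose (k - j)) * t (n + j - 2 * k))"
  proof (rule sum.cong)
    show "card (level j) = ((n - k) choose (k - j)) * t (n + j - 2 * k)" if "j \<in> jset \<tau>" for j
      using bij_betw_same_card[OF bij_betw_assemble[OF that]] card_components jset_iff that by simp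
  qed simp
  finally show ?thesis .
qed

end

theorem mainTheorem3:
  fixes \<tau> :: "nat list" and k n :: nat
  assumes "\<tau> \<in> perms k" and "n \<ge> k"
  shows "inv_count n \<tau> = (\<Sum>j\<in>jset \<tau>. ((n - k) choose (k - j)) * t (n + j - 2 * k))"
proof -
  interpret involution_pattern \<tau> k n
    using assms by unfold_locales
  have "contains_subseq p \<tau> \<longleftrightarrow> strict_mono_on {..<k} (\<lambda>r. perm_fun p (\<tau> ! r))"
    if "p \<in> involutions n" for p
    using contains_subseq_iff_strict_mono_on[OF that] set_\<tau> length_\<tau> k_le_n by auto
  then have "bij_betw perm_fun {p \<in> involutions n. contains_subseq p \<tau>} admissible"
    using bij_betw_Collect[OF bij_betw_perm_fun,
        where Q = "\<lambda>f. strict_mono_on {..<k} (\<lambda>r. f (\<tau> ! r))" and P = "\<lambda>p. contains_subseq p \<tau>"]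
    by (simp add: admissible_def)
  then have "inv_count n \<tau> = card admissible"
    by (simp add: inv_count_def bij_betw_same_card)
  then show ?thesis
    using card_admissible by simp
qed

end
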